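(* Let $\mathbb{X}$ be a finite set, $\mathcal{H}_A$ a finite-dimensional Hilbert space, and $\{\rho_A^x\}_{x\in\mathbb{X}}$ density operators on $\mathcal{H}_A$. Then the barycentric quantum Rényi leakage satisfies $\mathcal{B}(X\rightarrow A)_{\rho_A}=\log(\mu^\star)$, where $\mu^\star$ is the optimal value of the optimization problem \[ \min_{\pi\in\Delta(\mathbb{X}),\,\mu\in\mathbb{R}}\ \mu\quad\text{subject to}\quad \rho_A^x\leq\mu\sum_{x'\in\mathbb{X}}\pi(x')\rho_A^{x'}\ \ \text{for all }x\in\mathbb{X} \] (operator inequalities).
   Context: All logarithms are base 2. $\Delta(\mathbb{X})$ is the set of probability mass functions on $\mathbb{X}$. For a density operator $\rho$ and positive semi-definite $\sigma$, $\widetilde{D}_\infty(\rho\|\sigma)=\log\big(\inf\{\mu\in\mathbb{R}:\rho\leq\mu\sigma\}\big)$ ($+\infty$ if the support of $\rho$ is not contained in that of $\sigma$). The barycentric quantum Rényi leakage is $\mathcal{B}(X\rightarrow A)_{\rho_A}=\min_{\pi\in\Delta(\mathbb{X})}\max_{x\in\mathbb{X}}\widetilde{D}_\infty\big(\rho_A^x\,\|\,\sum_{x'}\pi(x')\rho_A^{x'}\big)$. *)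

theory Defs
  imports Complex_Main "HOL-Library.Extended_Real" "Jordan_Normal_Form.Matrix" "Jordan_Normal_Form.Conjugate"
begin

text \<open>Operators on the d-dimensional Hilbert space C^d are d x d complex matrices.\<close>

definition mtrace :: "complex mat \<Rightarrow> complex" where
  "mtrace A = (\<Sum>i<dim_row A. A $$ (i, i))"

definition psd :: "nat \<Rightarrow> complex mat \<Rightarrow> bool" where
  "psd d A \<longleftrightarrow> A \<in> carrier_mat d d \<and>
     (\<forall>v \<in> carrier_vec d. (A *\<^sub>v v) \<bullet>c v \<in> \<real> \<and> 0 \<le> Re ((A *\<^sub>v v) \<bullet>c v))"

definition op_le :: "nat \<Rightarrow> complex mat \<Rightarrow> complex mat \<Rightarrow> bool" where
  "op_le d A B \<longleftrightarrow> A \<in> carrier_mat d d \<and> B \<in> carrier_mat d d \<and> psd d (B - A)"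

definition density_op :: "nat \<Rightarrow> complex mat \<Rightarrow> bool" where
  "density_op d \<rho> \<longleftrightarrow> psd d \<rho> \<and> mtrace \<rho> = 1"

text \<open>Support (= range, for psd operators) of an operator.\<close>
definition supp_op :: "nat \<Rightarrow> complex mat \<Rightarrow> complex vec set" where
  "supp_op d A = {A *\<^sub>v v | v. v \<in> carrier_vec d}"

definition Dmax :: "nat \<Rightarrow> complex mat \<Rightarrow> complex mat \<Rightarrow> ereal" where
  "Dmax d \<rho> \<sigma> = (if supp_op d \<rho> \<subseteq> supp_op d \<sigma>
      then ereal (log 2 (Inf {\<mu>::real. op_le d \<rho> (complex_of_real \<mu> \<cdot>\<^sub>m \<sigma>)}))
      else \<infinity>)"

definition pmfs :: "('x::finite \<Rightarrow> real) set" where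
  "pmfs = {\<pi>. (\<forall>x. 0 \<le> \<pi> x) \<and> (\<Sum>x\<in>UNIV. \<pi> x) = 1}"

definition mixture :: "nat \<Rightarrow> ('x::finite \<Rightarrow> real) \<Rightarrow> ('x \<Rightarrow> complex mat) \<Rightarrow> complex mat" where
  "mixture d \<pi> \<rho> = mat d d (\<lambda>(i, j). \<Sum>x'\<in>UNIV. complex_of_real (\<pi> x') * \<rho> x' $$ (i, j))"

definition barycentric_leakage :: "nat \<Rightarrow> ('x::finite \<Rightarrow> complex mat) \<Rightarrow> ereal" where
  "barycentric_leakage d \<rho> =
     (INF \<pi>\<in>pmfs. Max (range (\<lambda>x. Dmax d (\<rho> x) (mixture d \<pi> \<rho>))))"

end

theory Submission
  imports Defs
begin

text \<open>
  For a fixed state \<open>\<sigma>\<close>, the set of \<open>\<mu>\<close> with \<open>\<rho> \<le> \<mu> \<sigma>\<close> is a closed ray \<open>[\<mu>\<^sub>0, \<infinity>)\<close>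
  with \<open>\<mu>\<^sub>0 \<ge> 1\<close>, non-empty exactly when \<open>supp \<rho> \<subseteq> supp \<sigma>\<close>. Hence the maximum over \<open>x\<close> of
  \<open>D\<^sub>\<infinity>(\<rho>\<^sub>x \<parallel> \<sigma>)\<close> is the logarithm of the least \<open>\<mu>\<close> with \<open>\<rho>\<^sub>x \<le> \<mu> \<sigma>\<close> for all \<open>x\<close> (and \<open>\<infinity>\<close> if
  there is none), and minimising over the mixtures \<open>\<sigma> = \<Sum>\<pi>(x) \<rho>\<^sub>x\<close> commutes with the
  monotone map \<open>log\<close>. The analytic core is that \<open>supp \<rho> \<subseteq> supp \<sigma>\<close> forces \<open>\<rho> \<le> \<mu> \<sigma>\<close> for some
  \<open>\<mu>\<close>: \<open>\<sigma>\<close> is bounded below on its range, by Cauchy-Schwarz for the form of \<open>\<sigma>\<close> and a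
  generalised inverse, which in turn comes from the decomposition of the space into range and
  kernel of a Hermitian matrix, obtained by orthogonal projection onto its columns.
\<close>

lemma cscalar_prod_eq_sum:
  "u \<in> carrier_vec n \<Longrightarrow> w \<in> carrier_vec n \<Longrightarrow> u \<bullet>c w = (\<Sum>i<n. u $ i * cnj (w $ i))"
  by (auto simp: scalar_prod_def lessThan_atLeast0 intro!: sum.cong)

lemma mult_mat_vec_eq_sum:
  "A \<in> carrier_mat n m \<Longrightarrow> v \<in> carrier_vec m \<Longrightarrow> i < n \<Longrightarrow>
    (A *\<^sub>v v) $ i = (\<Sum>j<m. A $$ (i, j) * v $ j)"
  by (auto simp: scalar_prod_def lessThan_atLeast0 intro!: sum.cong)

lemma diff_eq_0_vec_iff:
  "u \<in> carrier_vec n \<Longrightarrow> w \<in> carrier_vec n \<Longrightarrow> u - w = 0\<^sub>v n \<longleftrightarrow> u = (w :: 'a :: ab_group_add vec)"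
  by (auto simp: vec_eq_iff)

lemma smult_diff_mult_mat_vec:
  assumes "(A :: 'a :: comm_ring mat) \<in> carrier_mat n m" "B \<in> carrier_mat n m" "v \<in> carrier_vec m"
  shows "(c \<cdot>\<^sub>m A - B) *\<^sub>v v = c \<cdot>\<^sub>v (A *\<^sub>v v) - B *\<^sub>v v"
proof -
  have "(c \<cdot>\<^sub>m A) *\<^sub>v v = c \<cdot>\<^sub>v (A *\<^sub>v v)"
    using assms by (intro eq_vecI) (auto simp: row_smult)
  then show ?thesis
    using assms by (simp add: minus_mult_distrib_mat_vec[of _ n m])
qed

lemma cscalar_prod_add_left:
  "(u :: complex vec) \<in> carrier_vec n \<Longrightarrow> v \<in> carrier_vec n \<Longrightarrow> w \<in> carrier_vec n \<Longrightarrow>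
    (u + v) \<bullet>c w = u \<bullet>c w + v \<bullet>c w"
  by (subst (1 2 3) cscalar_prod_eq_sum[of _ n]) (auto simp: distrib_right sum.distrib)

lemma cscalar_prod_add_right:
  "(u :: complex vec) \<in> carrier_vec n \<Longrightarrow> v \<in> carrier_vec n \<Longrightarrow> w \<in> carrier_vec n \<Longrightarrow>
    u \<bullet>c (v + w) = u \<bullet>c v + u \<bullet>c w"
  by (simp add: cscalar_prod_eq_sum distrib_left sum.distrib)

lemma cscalar_prod_diff_left:
  "(u :: complex vec) \<in> carrier_vec n \<Longrightarrow> v \<in> carrier_vec n \<Longrightarrow> w \<in> carrier_vec n \<Longrightarrow>
    (u - v) \<bullet>c w = u \<bullet>c w - v \<bullet>c w"
  by (subst (1 2 3) cscalar_prod_eq_sum[of _ n]) (auto simp: left_diff_distrib sum_subtractf)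

lemma cscalar_prod_diff_right:
  "(u :: complex vec) \<in> carrier_vec n \<Longrightarrow> v \<in> carrier_vec n \<Longrightarrow> w \<in> carrier_vec n \<Longrightarrow>
    u \<bullet>c (v - w) = u \<bullet>c v - u \<bullet>c w"
  by (simp add: cscalar_prod_eq_sum right_diff_distrib sum_subtractf)

lemma cscalar_prod_smult_left:
  "(u :: complex vec) \<in> carrier_vec n \<Longrightarrow> w \<in> carrier_vec n \<Longrightarrow> (c \<cdot>\<^sub>v u) \<bullet>c w = c * (u \<bullet>c w)"
  by (simp add: cscalar_prod_eq_sum sum_distrib_left mult.assoc)

lemma cscalar_prod_smult_right:
  "(u :: complex vec) \<in> carrier_vec n \<Longrightarrow> w \<in> carrier_vec n \<Longrightarrow> u \<bullet>c (c \<cdot>\<^sub>v w) = cnj c * (u \<bullet>c w)"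
  by (simp add: cscalar_prod_eq_sum sum_distrib_left ac_simps)

lemma cnj_cscalar_prod:
  "(u :: complex vec) \<in> carrier_vec n \<Longrightarrow> w \<in> carrier_vec n \<Longrightarrow> cnj (u \<bullet>c w) = w \<bullet>c u"
  by (simp add: cscalar_prod_eq_sum mult.commute)

lemma cscalar_prod_self:
  "(u :: complex vec) \<in> carrier_vec n \<Longrightarrow> u \<bullet>c u = complex_of_real (\<Sum>i<n. (cmod (u $ i))\<^sup>2)"
  by (simp only: cscalar_prod_eq_sum of_real_sum complex_norm_square)

lemma Re_cscalar_prod_self_nonneg: "(u :: complex vec) \<in> carrier_vec n \<Longrightarrow> 0 \<le> Re (u \<bullet>c u)"
  by (simp add: cscalar_prod_self sum_nonneg)

lemma two_Re_cscalar_prod_le: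
  assumes "(u :: complex vec) \<in> carrier_vec n" "w \<in> carrier_vec n"
  shows "2 * Re (u \<bullet>c w) \<le> Re (u \<bullet>c u) + Re (w \<bullet>c w)"
proof -
  have "(u - w) \<bullet>c (u - w) = u \<bullet>c u - u \<bullet>c w - (w \<bullet>c u - w \<bullet>c w)"
    using assms by (simp add: cscalar_prod_diff_left[of _ n] cscalar_prod_diff_right[of _ n])
  moreover have "Re (w \<bullet>c u) = Re (u \<bullet>c w)"
    by (simp flip: cnj_cscalar_prod[OF assms])
  moreover have "0 \<le> Re ((u - w) \<bullet>c (u - w))"
    using assms by (intro Re_cscalar_prod_self_nonneg[of _ n]) auto
  ultimately show ?thesis by simp
qed

section \<open>Hermitian and positive semidefinite matrices\<close>

definition hermitian :: "nat \<Rightarrow> complex mat \<Rightarrow> bool" where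
  "hermitian n A \<longleftrightarrow> A \<in> carrier_mat n n \<and> (\<forall>i<n. \<forall>j<n. A $$ (i, j) = cnj (A $$ (j, i)))"

lemma hermitian_carrier_mat: "hermitian n A \<Longrightarrow> A \<in> carrier_mat n n"
  unfolding hermitian_def by blast

lemma hermitian_cscalar_prod_swap:
  assumes "hermitian n A" and u: "u \<in> carrier_vec n" and w: "w \<in> carrier_vec n"
  shows "(A *\<^sub>v u) \<bullet>c w = u \<bullet>c (A *\<^sub>v w)"
proof -
  have A: "A \<in> carrier_mat n n" and sym: "\<And>i j. i < n \<Longrightarrow> j < n \<Longrightarrow> A $$ (i, j) = cnj (A $$ (j, i))"
    using assms(1) unfolding hermitian_def by blast+
  have "(A *\<^sub>v u) \<bullet>c w = (\<Sum>i<n. \<Sum>j<n. A $$ (i, j) * u $ j * cnj (w $ i))"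
    using A u w by (simp add: cscalar_prod_eq_sum[of _ n] mult_mat_vec_eq_sum[OF A u] sum_distrib_right
        del: index_mult_mat_vec)
  also have "\<dots> = (\<Sum>j<n. \<Sum>i<n. u $ j * cnj (A $$ (j, i) * w $ i))"
  proof (subst sum.swap, intro sum.cong refl)
    fix i j assume "i \<in> {..<n}" "j \<in> {..<n}"
    then show "A $$ (i, j) * u $ j * cnj (w $ i) = u $ j * cnj (A $$ (j, i) * w $ i)"
      by (simp add: sym[of i j])
  qed
  also have "\<dots> = u \<bullet>c (A *\<^sub>v w)"
    using A u w by (simp add: cscalar_prod_eq_sum[of _ n] mult_mat_vec_eq_sum[OF A w] sum_distrib_left
        del: index_mult_mat_vec)
  finally show ?thesis .
qed

lemma cscalar_prod_unit_vec:
  assumes "(A :: complex mat) \<in> carrier_mat n n" "i < n" "j < n"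
  shows "(A *\<^sub>v unit_vec n j) \<bullet>c unit_vec n i = A $$ (i, j)"
  using assms by (simp add: scalar_prod_def unit_vec_def if_distrib cong: if_cong)

lemma quadratic_form_add_smult:
  assumes A: "(A :: complex mat) \<in> carrier_mat n n" and u: "u \<in> carrier_vec n" and w: "w \<in> carrier_vec n"
  shows "(A *\<^sub>v (u + c \<cdot>\<^sub>v w)) \<bullet>c (u + c \<cdot>\<^sub>v w) =
    (A *\<^sub>v u) \<bullet>c u + cnj c * ((A *\<^sub>v u) \<bullet>c w) + c * ((A *\<^sub>v w) \<bullet>c u) + c * cnj c * ((A *\<^sub>v w) \<bullet>c w)"
proof -
  have "A *\<^sub>v (u + c \<cdot>\<^sub>v w) = A *\<^sub>v u + c \<cdot>\<^sub>v (A *\<^sub>v w)"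
    using A u w by (simp add: mult_add_distrib_mat_vec[OF A] mult_mat_vec[OF A])
  then show ?thesis
    using A u w by (simp add: cscalar_prod_add_left[of _ n] cscalar_prod_add_right[of _ n]
        cscalar_prod_smult_left[of _ n] cscalar_prod_smult_right[of _ n] algebra_simps)
qed

lemma psd_quadratic_form_real:
  "psd n A \<Longrightarrow> v \<in> carrier_vec n \<Longrightarrow> (A *\<^sub>v v) \<bullet>c v = complex_of_real (Re ((A *\<^sub>v v) \<bullet>c v))"
  unfolding psd_def by (auto simp: complex_is_Real_iff complex_eq_iff)

lemma psd_quadratic_form_nonneg: "psd n A \<Longrightarrow> v \<in> carrier_vec n \<Longrightarrow> 0 \<le> Re ((A *\<^sub>v v) \<bullet>c v)"
  unfolding psd_def by auto

lemma psd_hermitian: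
  assumes "psd n A"
  shows "hermitian n A"
proof -
  have A: "A \<in> carrier_mat n n" and real: "\<And>v. v \<in> carrier_vec n \<Longrightarrow> (A *\<^sub>v v) \<bullet>c v \<in> \<real>"
    using assms unfolding psd_def by auto
  have "A $$ (i, j) = cnj (A $$ (j, i))" if i: "i < n" and j: "j < n" for i j
  proof -
    have "Im (cnj c * A $$ (j, i) + c * A $$ (i, j)) = 0" for c
      using real[of "unit_vec n i + c \<cdot>\<^sub>v unit_vec n j"] real[of "unit_vec n i"] real[of "unit_vec n j"]
        quadratic_form_add_smult[OF A, of "unit_vec n i" "unit_vec n j" c]
      by (simp add: cscalar_prod_unit_vec[OF A] i j complex_is_Real_iff)
    from this[of 1] this[of \<i>] show ?thesis
      by (simp add: complex_eq_iff)
  qed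
  with A show ?thesis unfolding hermitian_def by blast
qed

lemma nonneg_quadratic_discriminant:
  fixes a b g :: real
  assumes nonneg: "\<And>t. 0 \<le> b - 2 * t * a + t\<^sup>2 * g" and "0 \<le> g"
  shows "a\<^sup>2 \<le> b * g"
proof (cases "g = 0")
  case True
  have "a = 0"
  proof (rule ccontr)
    assume "a \<noteq> 0"
    then have "b - 2 * ((b + 1) / (2 * a)) * a = -1" by (simp add: field_simps)
    with nonneg[of "(b + 1) / (2 * a)"] True show False by simp
  qed
  with True show ?thesis by simp
next
  case False
  with \<open>0 \<le> g\<close> have g: "0 < g" by simp
  have "b - 2 * (a / g) * a + (a / g)\<^sup>2 * g = b - a\<^sup>2 / g"
    using g by (simp add: field_simps power2_eq_square)
  with nonneg[of "a / g"] have "a\<^sup>2 / g \<le> b" by simp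
  with g show ?thesis by (simp add: field_simps mult.commute)
qed

lemma psd_cauchy_schwarz:
  assumes p: "psd n A" and a: "a \<in> carrier_vec n" and b: "b \<in> carrier_vec n"
    and real: "(A *\<^sub>v b) \<bullet>c a \<in> \<real>"
  shows "(Re ((A *\<^sub>v b) \<bullet>c a))\<^sup>2 \<le> Re ((A *\<^sub>v b) \<bullet>c b) * Re ((A *\<^sub>v a) \<bullet>c a)"
proof (rule nonneg_quadratic_discriminant)
  have A: "A \<in> carrier_mat n n" using p unfolding psd_def by auto
  have "(A *\<^sub>v a) \<bullet>c b = cnj ((A *\<^sub>v b) \<bullet>c a)"
    using hermitian_cscalar_prod_swap[OF psd_hermitian[OF p] a b] cnj_cscalar_prod[of "A *\<^sub>v b" n a] A a b
    by simp
  also have "\<dots> = (A *\<^sub>v b) \<bullet>c a" using real by (simp add: Reals_cnj_iff)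
  finally have swap: "(A *\<^sub>v a) \<bullet>c b = (A *\<^sub>v b) \<bullet>c a" .
  fix t :: real
  have "0 \<le> Re ((A *\<^sub>v (b + (- of_real t) \<cdot>\<^sub>v a)) \<bullet>c (b + (- of_real t) \<cdot>\<^sub>v a))"
    using a b by (intro psd_quadratic_form_nonneg[OF p]) auto
  also have "\<dots> = Re ((A *\<^sub>v b) \<bullet>c b) - 2 * t * Re ((A *\<^sub>v b) \<bullet>c a) + t\<^sup>2 * Re ((A *\<^sub>v a) \<bullet>c a)"
    unfolding quadratic_form_add_smult[OF A b a] swap by (simp add: power2_eq_square)
  finally show "0 \<le> \<dots>" .
next
  show "0 \<le> Re ((A *\<^sub>v a) \<bullet>c a)" by (rule psd_quadratic_form_nonneg[OF p a])
qed

lemma psd_kernel_of_quadratic_form_eq_0: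
  assumes p: "psd n A" and v: "v \<in> carrier_vec n" and zero: "Re ((A *\<^sub>v v) \<bullet>c v) = 0"
  shows "A *\<^sub>v v = 0\<^sub>v n"
proof -
  have Av: "A *\<^sub>v v \<in> carrier_vec n" using p v unfolding psd_def by auto
  have real: "(A *\<^sub>v v) \<bullet>c (A *\<^sub>v v) \<in> \<real>" using cscalar_prod_self[OF Av] by simp
  have "(Re ((A *\<^sub>v v) \<bullet>c (A *\<^sub>v v)))\<^sup>2 \<le> 0"
    using psd_cauchy_schwarz[OF p Av v real] zero by simp
  then have "(A *\<^sub>v v) \<bullet>c (A *\<^sub>v v) = 0"
    using real by (simp add: complex_eq_iff complex_is_Real_iff)
  with Av show ?thesis by simp
qed

section \<open>Range and kernel of Hermitian matrices\<close>

lemma cscalar_prod_mult_mat_vec_eq_0: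
  assumes A: "(A :: complex mat) \<in> carrier_mat n m" and w: "w \<in> carrier_vec n" and x: "x \<in> carrier_vec m"
    and orth: "\<And>j. j < m \<Longrightarrow> x $ j = 0 \<or> w \<bullet>c col A j = 0"
  shows "w \<bullet>c (A *\<^sub>v x) = 0"
proof -
  have "w \<bullet>c (A *\<^sub>v x) = (\<Sum>i<n. \<Sum>j<m. cnj (x $ j) * (w $ i * cnj (A $$ (i, j))))"
    using A w x by (simp add: cscalar_prod_eq_sum[of _ n] mult_mat_vec_eq_sum[OF A x] sum_distrib_left
        mult_ac del: index_mult_mat_vec)
  also have "\<dots> = (\<Sum>j<m. cnj (x $ j) * (w \<bullet>c col A j))"
    using A w by (subst sum.swap) (simp add: cscalar_prod_eq_sum[of _ n] sum_distrib_left)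
  also have "\<dots> = 0"
    using orth by (intro sum.neutral) fastforce
  finally show ?thesis .
qed

lemma cscalar_prod_diff_projection:
  assumes w: "(w :: complex vec) \<in> carrier_vec n" and r: "r \<in> carrier_vec n"
  shows "(w - ((w \<bullet>c r) / (r \<bullet>c r)) \<cdot>\<^sub>v r) \<bullet>c r = 0"
  \<comment> \<open>also for \<open>r = 0\<close>, where the coefficient is \<open>0 / 0 = 0\<close>\<close>
  using w r by (cases "r = 0\<^sub>v n") (simp_all add: cscalar_prod_diff_left[of _ n] cscalar_prod_smult_left[of _ n])

lemma ex_residual_orthogonal_to_first_columns:
  assumes A: "(A :: complex mat) \<in> carrier_mat n m" and "k \<le> m" and "v \<in> carrier_vec n"
  shows "\<exists>x\<in>carrier_vec m. (\<forall>j. k \<le> j \<longrightarrow> j < m \<longrightarrow> x $ j = 0) \<and> (\<forall>j<k. (v - A *\<^sub>v x) \<bullet>c col A j = 0)"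
  using assms(2,3)
proof (induction k arbitrary: v)
  case 0
  show ?case by (intro bexI[of _ "0\<^sub>v m"]) auto
next
  case (Suc k)
  then have k: "k < m" by simp
  have u: "col A k \<in> carrier_vec n" using A k by simp
  obtain xv where xv: "xv \<in> carrier_vec m" "\<forall>j. k \<le> j \<longrightarrow> j < m \<longrightarrow> xv $ j = 0"
    and orth_v: "\<forall>j<k. (v - A *\<^sub>v xv) \<bullet>c col A j = 0"
    using Suc by force
  obtain xu where xu: "xu \<in> carrier_vec m" "\<forall>j. k \<le> j \<longrightarrow> j < m \<longrightarrow> xu $ j = 0"
    and orth_u: "\<forall>j<k. (col A k - A *\<^sub>v xu) \<bullet>c col A j = 0"
    using Suc.IH[OF _ u] k by force
  define w where "w = v - A *\<^sub>v xv"
  define r where "r = col A k - A *\<^sub>v xu"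
  \<comment> \<open>Gram-Schmidt step: correct the residual \<open>w\<close> of \<open>v\<close> by the residual \<open>r\<close> of column \<open>k\<close>\<close>
  define c where "c = (w \<bullet>c r) / (r \<bullet>c r)"
  define x where "x = xv + c \<cdot>\<^sub>v (unit_vec m k - xu)"
  have w: "w \<in> carrier_vec n" and r: "r \<in> carrier_vec n" and x: "x \<in> carrier_vec m"
    using A u xv xu Suc.prems unfolding w_def r_def x_def by auto
  have "A *\<^sub>v x = A *\<^sub>v xv + c \<cdot>\<^sub>v (A *\<^sub>v unit_vec m k - A *\<^sub>v xu)"
    using A xv xu by (simp add: x_def mult_add_distrib_mat_vec[OF A] mult_mat_vec[OF A]
        mult_minus_distrib_mat_vec[OF A])
  then have res: "v - A *\<^sub>v x = w - c \<cdot>\<^sub>v r"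
    using A Suc.prems k unfolding w_def r_def by (intro eq_vecI) (auto simp: algebra_simps)
  have orth_lower: "(w - c \<cdot>\<^sub>v r) \<bullet>c col A j = 0" if "j < k" for j
  proof -
    have "col A j \<in> carrier_vec n" using A by (simp add: carrier_vecI)
    then show ?thesis
      using that orth_v orth_u w r by (simp add: cscalar_prod_diff_left[of _ n]
          cscalar_prod_smult_left[of _ n] w_def[symmetric] r_def[symmetric])
  qed
  have "(w - c \<cdot>\<^sub>v r) \<bullet>c r = 0"
    unfolding c_def by (rule cscalar_prod_diff_projection[OF w r])
  moreover have "(w - c \<cdot>\<^sub>v r) \<bullet>c (A *\<^sub>v xu) = 0"
    using w r xu orth_lower by (intro cscalar_prod_mult_mat_vec_eq_0[OF A _ xu(1)]) (auto, meson not_le)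
  moreover have "col A k = r + A *\<^sub>v xu"
    using u A xu unfolding r_def by (intro eq_vecI) auto
  ultimately have "(w - c \<cdot>\<^sub>v r) \<bullet>c col A k = 0"
    using w r A xu by (simp add: cscalar_prod_add_right[of _ n])
  with orth_lower have "\<forall>j<Suc k. (v - A *\<^sub>v x) \<bullet>c col A j = 0"
    unfolding res using less_Suc_eq by auto
  moreover have "\<forall>j. Suc k \<le> j \<longrightarrow> j < m \<longrightarrow> x $ j = 0"
    using xv xu by (simp add: x_def)
  ultimately show ?case using x by blast
qed

lemma ex_residual_orthogonal_to_columns:
  assumes "(A :: complex mat) \<in> carrier_mat n m" and "v \<in> carrier_vec n"
  shows "\<exists>x\<in>carrier_vec m. \<forall>j<m. (v - A *\<^sub>v x) \<bullet>c col A j = 0"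
  using ex_residual_orthogonal_to_first_columns[OF assms(1) order.refl assms(2)] by blast

lemma hermitian_mult_mat_vec_eq_cscalar_prod_col:
  assumes "hermitian n A" and w: "w \<in> carrier_vec n" and j: "j < n"
  shows "(A *\<^sub>v w) $ j = w \<bullet>c col A j"
proof -
  have A: "A \<in> carrier_mat n n" and sym: "\<And>i. i < n \<Longrightarrow> A $$ (j, i) = cnj (A $$ (i, j))"
    using assms unfolding hermitian_def by blast+
  have col: "col A j \<in> carrier_vec n" using A by (simp add: carrier_vecI)
  have "(A *\<^sub>v w) $ j = (\<Sum>i<n. w $ i * cnj (A $$ (i, j)))"
    unfolding mult_mat_vec_eq_sum[OF A w j] by (intro sum.cong refl) (simp add: sym)
  also have "\<dots> = w \<bullet>c col A j"
    using A w j col by (simp add: cscalar_prod_eq_sum[of _ n])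
  finally show ?thesis .
qed

lemma hermitian_range_kernel_decomposition:
  assumes "hermitian n A" and v: "v \<in> carrier_vec n"
  shows "\<exists>x\<in>carrier_vec n. A *\<^sub>v (v - A *\<^sub>v x) = 0\<^sub>v n"
proof -
  have A: "A \<in> carrier_mat n n" using hermitian_carrier_mat[OF assms(1)] .
  obtain x where x: "x \<in> carrier_vec n" and orth: "\<forall>j<n. (v - A *\<^sub>v x) \<bullet>c col A j = 0"
    using ex_residual_orthogonal_to_columns[OF A v] by blast
  have "(A *\<^sub>v (v - A *\<^sub>v x)) $ j = 0" if "j < n" for j
    using hermitian_mult_mat_vec_eq_cscalar_prod_col[OF assms(1) _ that, of "v - A *\<^sub>v x"] that A v x orth
    by simp
  then have "A *\<^sub>v (v - A *\<^sub>v x) = 0\<^sub>v n"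
    using A by (intro eq_vecI) auto
  with x show ?thesis by blast
qed

lemma hermitian_kernel_inter_range:
  assumes h: "hermitian n A" and z: "z \<in> carrier_vec n" and "A *\<^sub>v (A *\<^sub>v z) = 0\<^sub>v n"
  shows "A *\<^sub>v z = 0\<^sub>v n"
proof -
  have Az: "A *\<^sub>v z \<in> carrier_vec n" using hermitian_carrier_mat[OF h] z by simp
  have "(A *\<^sub>v z) \<bullet>c (A *\<^sub>v z) = z \<bullet>c (A *\<^sub>v (A *\<^sub>v z))"
    by (rule hermitian_cscalar_prod_swap[OF h z Az])
  with assms(3) z Az show ?thesis by simp
qed

lemma hermitian_kernel_subset_of_supp_subset:
  assumes hA: "hermitian n A" and hB: "hermitian n B" and sub: "supp_op n A \<subseteq> supp_op n B"
    and k: "k \<in> carrier_vec n" and Bk: "B *\<^sub>v k = 0\<^sub>v n"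
  shows "A *\<^sub>v k = 0\<^sub>v n"
proof -
  have A: "A \<in> carrier_mat n n" and B: "B \<in> carrier_mat n n"
    using hA hB by (auto intro: hermitian_carrier_mat)
  have "A *\<^sub>v (A *\<^sub>v k) \<in> supp_op n A"
    using A k unfolding supp_op_def by (auto intro!: exI[of _ "A *\<^sub>v k"])
  with sub obtain x where x: "x \<in> carrier_vec n" and AAk: "A *\<^sub>v (A *\<^sub>v k) = B *\<^sub>v x"
    unfolding supp_op_def by auto
  have "(A *\<^sub>v k) \<bullet>c (A *\<^sub>v k) = k \<bullet>c (B *\<^sub>v x)"
    using hermitian_cscalar_prod_swap[OF hA k, of "A *\<^sub>v k"] A k AAk by simp
  also have "\<dots> = 0"
    using hermitian_cscalar_prod_swap[OF hB x k] cnj_cscalar_prod[of "B *\<^sub>v x" n k] B k x Bk by simp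
  finally show ?thesis using A k conjugate_square_eq_0_vec[of "A *\<^sub>v k" n] by simp
qed

lemma hermitian_supp_subset_of_kernel_subset:
  assumes hA: "hermitian n A" and hB: "hermitian n B"
    and ker: "\<And>k. k \<in> carrier_vec n \<Longrightarrow> B *\<^sub>v k = 0\<^sub>v n \<Longrightarrow> A *\<^sub>v k = 0\<^sub>v n"
  shows "supp_op n A \<subseteq> supp_op n B"
proof
  have A: "A \<in> carrier_mat n n" and B: "B \<in> carrier_mat n n"
    using hA hB by (auto intro: hermitian_carrier_mat)
  fix y assume "y \<in> supp_op n A"
  then obtain v where v: "v \<in> carrier_vec n" and y: "y = A *\<^sub>v v" unfolding supp_op_def by auto
  have yc: "y \<in> carrier_vec n" using y A v by simp
  obtain x where x: "x \<in> carrier_vec n" and Bk: "B *\<^sub>v (y - B *\<^sub>v x) = 0\<^sub>v n"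
    using hermitian_range_kernel_decomposition[OF hB yc] by blast
  define k where "k = y - B *\<^sub>v x"
  have k: "k \<in> carrier_vec n" unfolding k_def using yc x B by simp
  have Ak: "A *\<^sub>v k = 0\<^sub>v n" using ker k Bk unfolding k_def by blast
  have "k \<bullet>c k = (A *\<^sub>v v) \<bullet>c k - (B *\<^sub>v x) \<bullet>c k"
    using cscalar_prod_diff_left[of y n "B *\<^sub>v x" k] yc x B k unfolding k_def y by simp
  also have "\<dots> = v \<bullet>c (A *\<^sub>v k) - x \<bullet>c (B *\<^sub>v k)"
    using hermitian_cscalar_prod_swap[OF hA v k] hermitian_cscalar_prod_swap[OF hB x k] by simp
  finally have "k = 0\<^sub>v n" using Ak Bk v x k unfolding k_def by simp
  then have "y = B *\<^sub>v x"
    using yc x B unfolding k_def by (simp add: diff_eq_0_vec_iff)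
  with x show "y \<in> supp_op n B" unfolding supp_op_def by blast
qed

lemma hermitian_ex_mult_mult_eq:
  assumes h: "hermitian n A"
  shows "\<exists>G\<in>carrier_mat n n. A * A * G = A"
proof -
  have A: "A \<in> carrier_mat n n" by (rule hermitian_carrier_mat[OF h])
  have "\<exists>g. g \<in> carrier_vec n \<and> A *\<^sub>v (A *\<^sub>v g) = col A j" if j: "j < n" for j
  proof -
    obtain g where g: "g \<in> carrier_vec n" and "A *\<^sub>v (unit_vec n j - A *\<^sub>v g) = 0\<^sub>v n"
      using hermitian_range_kernel_decomposition[OF h, of "unit_vec n j"] by auto
    then have "A *\<^sub>v (A *\<^sub>v g) = A *\<^sub>v unit_vec n j"
      using A by (simp add: mult_minus_distrib_mat_vec[OF A] diff_eq_0_vec_iff[of _ n])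
    also have "A *\<^sub>v unit_vec n j = col A j"
      using A j by (intro eq_vecI) auto
    finally show ?thesis using g by blast
  qed
  then obtain g where g: "\<And>j. j < n \<Longrightarrow> g j \<in> carrier_vec n \<and> A *\<^sub>v (A *\<^sub>v g j) = col A j"
    by metis
  define G where "G = mat n n (\<lambda>(i, j). g j $ i)"
  have G: "G \<in> carrier_mat n n" unfolding G_def by simp
  have "A * A * G = A"
  proof (rule mat_col_eqI)
    fix j assume "j < dim_col A"
    then have j: "j < n" using A by simp
    have "col G j = g j" using g[OF j] j unfolding G_def by (intro eq_vecI) auto
    then have "col (A * A * G) j = (A * A) *\<^sub>v g j"
      using col_mult2[OF mult_carrier_mat[OF A A] G j] by simp
    also have "\<dots> = col A j" using A g[OF j] by simp
    finally show "col (A * A * G) j = col A j" .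
  qed (use A G in auto)
  with G show ?thesis by blast
qed

lemma hermitian_ex_generalized_inverse:
  assumes h: "hermitian n A"
  shows "\<exists>G\<in>carrier_mat n n. \<forall>x\<in>carrier_vec n. A *\<^sub>v (G *\<^sub>v (A *\<^sub>v x)) = A *\<^sub>v x"
proof -
  have A: "A \<in> carrier_mat n n" by (rule hermitian_carrier_mat[OF h])
  obtain G where G: "G \<in> carrier_mat n n" and AAG: "A * A * G = A"
    using hermitian_ex_mult_mult_eq[OF h] by blast
  have "A *\<^sub>v (G *\<^sub>v (A *\<^sub>v x)) = A *\<^sub>v x" if x: "x \<in> carrier_vec n" for x
  proof -
    define z where "z = G *\<^sub>v (A *\<^sub>v x) - x"
    have z: "z \<in> carrier_vec n" using A G x unfolding z_def by simp
    have "A *\<^sub>v (A *\<^sub>v (G *\<^sub>v (A *\<^sub>v x))) = (A * A * G) *\<^sub>v (A *\<^sub>v x)"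
      using A G x by (simp add: assoc_mult_mat_vec[of _ n n _ n])
    then have "A *\<^sub>v (A *\<^sub>v z) = 0\<^sub>v n"
      using A G x unfolding z_def AAG by (simp add: mult_minus_distrib_mat_vec[OF A])
    then have "A *\<^sub>v z = 0\<^sub>v n" by (rule hermitian_kernel_inter_range[OF h z])
    then show ?thesis
      using A G x unfolding z_def by (simp add: mult_minus_distrib_mat_vec[OF A] diff_eq_0_vec_iff[of _ n])
  qed
  with G show ?thesis by blast
qed

section \<open>Domination between positive semidefinite matrices\<close>

lemma mult_mat_vec_norm_bound:
  assumes A: "(A :: complex mat) \<in> carrier_mat n m"
  shows "\<exists>C\<ge>0. \<forall>u\<in>carrier_vec m. Re ((A *\<^sub>v u) \<bullet>c (A *\<^sub>v u)) \<le> C * Re (u \<bullet>c u)"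
proof -
  define S where "S = (\<Sum>i<n. \<Sum>j<m. cmod (A $$ (i, j)))"
  have "Re ((A *\<^sub>v u) \<bullet>c (A *\<^sub>v u)) \<le> real n * S\<^sup>2 * Re (u \<bullet>c u)" if u: "u \<in> carrier_vec m" for u
  proof -
    define N where "N = Re (u \<bullet>c u)"
    have N: "0 \<le> N" unfolding N_def by (rule Re_cscalar_prod_self_nonneg[OF u])
    have coord: "cmod (u $ j) \<le> sqrt N" if "j < m" for j
    proof -
      have "(cmod (u $ j))\<^sup>2 \<le> N"
        unfolding N_def cscalar_prod_self[OF u] using that by (auto intro: member_le_sum)
      then show ?thesis by (simp add: real_le_rsqrt)
    qed
    have "cmod ((A *\<^sub>v u) $ i) \<le> S * sqrt N" if i: "i < n" for i
    proof -
      have "cmod ((A *\<^sub>v u) $ i) \<le> (\<Sum>j<m. cmod (A $$ (i, j)) * cmod (u $ j))"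
        unfolding mult_mat_vec_eq_sum[OF A u i] by (rule norm_sum[THEN order_trans]) (simp add: norm_mult)
      also have "\<dots> \<le> (\<Sum>j<m. cmod (A $$ (i, j))) * sqrt N"
        unfolding sum_distrib_right by (intro sum_mono mult_left_mono coord) auto
      also have "\<dots> \<le> S * sqrt N"
        unfolding S_def using i N by (intro mult_right_mono member_le_sum) (auto intro: sum_nonneg)
      finally show ?thesis .
    qed
    then have "(\<Sum>i<n. (cmod ((A *\<^sub>v u) $ i))\<^sup>2) \<le> (\<Sum>i<n. (S * sqrt N)\<^sup>2)"
      by (intro sum_mono power_mono) auto
    then show ?thesis
      using A u N by (simp add: cscalar_prod_self[of _ n] N_def power_mult_distrib)
  qed
  then show ?thesis by (intro exI[of _ "real n * S\<^sup>2"]) auto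
qed

lemma quadratic_form_bound:
  assumes A: "(A :: complex mat) \<in> carrier_mat n n"
  shows "\<exists>C\<ge>0. \<forall>u\<in>carrier_vec n. Re ((A *\<^sub>v u) \<bullet>c u) \<le> C * Re (u \<bullet>c u)"
proof -
  obtain C where C: "C \<ge> 0" "\<forall>u\<in>carrier_vec n. Re ((A *\<^sub>v u) \<bullet>c (A *\<^sub>v u)) \<le> C * Re (u \<bullet>c u)"
    using mult_mat_vec_norm_bound[OF A] by blast
  have "Re ((A *\<^sub>v u) \<bullet>c u) \<le> (C + 1) / 2 * Re (u \<bullet>c u)" if u: "u \<in> carrier_vec n" for u
    using two_Re_cscalar_prod_le[of "A *\<^sub>v u" n u] C(2) u A by (force simp: field_simps)
  with C show ?thesis by (intro exI[of _ "(C + 1) / 2"]) auto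
qed

lemma psd_norm_le_quadratic_form_on_range:
  assumes p: "psd n A"
  shows "\<exists>C\<ge>0. \<forall>x\<in>carrier_vec n.
    Re ((A *\<^sub>v x) \<bullet>c (A *\<^sub>v x)) \<le> C * Re ((A *\<^sub>v (A *\<^sub>v x)) \<bullet>c (A *\<^sub>v x))"
proof -
  have A: "A \<in> carrier_mat n n" using p unfolding psd_def by blast
  obtain G where G: "G \<in> carrier_mat n n" and inv: "\<forall>x\<in>carrier_vec n. A *\<^sub>v (G *\<^sub>v (A *\<^sub>v x)) = A *\<^sub>v x"
    using hermitian_ex_generalized_inverse[OF psd_hermitian[OF p]] by blast
  obtain CG where CG: "CG \<ge> 0" "\<forall>u\<in>carrier_vec n. Re ((G *\<^sub>v u) \<bullet>c (G *\<^sub>v u)) \<le> CG * Re (u \<bullet>c u)"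
    using mult_mat_vec_norm_bound[OF G] by blast
  obtain CA where CA: "CA \<ge> 0" "\<forall>u\<in>carrier_vec n. Re ((A *\<^sub>v u) \<bullet>c u) \<le> CA * Re (u \<bullet>c u)"
    using quadratic_form_bound[OF A] by blast
  have "Re (a \<bullet>c a) \<le> CA * CG * Re ((A *\<^sub>v a) \<bullet>c a)" if x: "x \<in> carrier_vec n" and a: "a = A *\<^sub>v x" for x a
  proof -
    \<comment> \<open>\<open>b = G a\<close> satisfies \<open>A b = a\<close> and \<open>|b|\<^sup>2 \<le> CG |a|\<^sup>2\<close>, so Cauchy-Schwarz gives
      \<open>|a|\<^sup>4 = \<langle>A b, a\<rangle>\<^sup>2 \<le> \<langle>A b, b\<rangle> \<langle>A a, a\<rangle> \<le> CA CG |a|\<^sup>2 \<langle>A a, a\<rangle>\<close>\<close>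
    define b where "b = G *\<^sub>v a"
    have ac: "a \<in> carrier_vec n" and b: "b \<in> carrier_vec n" using A G x a unfolding b_def by auto
    have Ab: "A *\<^sub>v b = a" using inv x a unfolding b_def by blast
    define N where "N = Re (a \<bullet>c a)"
    have N: "0 \<le> N" unfolding N_def by (rule Re_cscalar_prod_self_nonneg[OF ac])
    have qa: "0 \<le> Re ((A *\<^sub>v a) \<bullet>c a)" by (rule psd_quadratic_form_nonneg[OF p ac])
    have "N\<^sup>2 \<le> Re ((A *\<^sub>v b) \<bullet>c b) * Re ((A *\<^sub>v a) \<bullet>c a)"
      using psd_cauchy_schwarz[OF p ac b] cscalar_prod_self[OF ac] unfolding Ab N_def by simp
    also have "\<dots> \<le> CA * (CG * N) * Re ((A *\<^sub>v a) \<bullet>c a)"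
    proof (intro mult_right_mono qa)
      have "Re ((A *\<^sub>v b) \<bullet>c b) \<le> CA * Re (b \<bullet>c b)" using CA b by blast
      also have "\<dots> \<le> CA * (CG * N)"
        using CG ac CA(1) unfolding b_def N_def by (intro mult_left_mono) auto
      finally show "Re ((A *\<^sub>v b) \<bullet>c b) \<le> CA * (CG * N)" .
    qed
    finally have "N * N \<le> N * (CA * CG * Re ((A *\<^sub>v a) \<bullet>c a))"
      by (simp add: power2_eq_square mult_ac)
    then show ?thesis
      using N CA(1) CG(1) qa unfolding N_def[symmetric]
      by (cases "N = 0") (auto simp: mult_le_cancel_left)
  qed
  with CA CG show ?thesis by (intro exI[of _ "CA * CG"]) auto
qed

lemma hermitian_quadratic_form_add_kernel:
  assumes h: "hermitian n M" and a: "a \<in> carrier_vec n" and k: "k \<in> carrier_vec n"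
    and Mk: "M *\<^sub>v k = 0\<^sub>v n"
  shows "(M *\<^sub>v (a + k)) \<bullet>c (a + k) = (M *\<^sub>v a) \<bullet>c a"
proof -
  have M: "M \<in> carrier_mat n n" by (rule hermitian_carrier_mat[OF h])
  have "M *\<^sub>v (a + k) = M *\<^sub>v a"
    using M a k Mk by (simp add: mult_add_distrib_mat_vec[OF M])
  moreover have "(M *\<^sub>v a) \<bullet>c k = 0"
    using hermitian_cscalar_prod_swap[OF h a k] Mk a by simp
  ultimately show ?thesis
    using M a k by (simp add: cscalar_prod_add_right[of _ n])
qed

lemma psd_le_scaled_of_kernel_subset:
  assumes r: "psd n \<rho>" and s: "psd n \<sigma>"
    and ker: "\<forall>k\<in>carrier_vec n. \<sigma> *\<^sub>v k = 0\<^sub>v n \<longrightarrow> \<rho> *\<^sub>v k = 0\<^sub>v n"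
  shows "\<exists>\<mu>. \<forall>v\<in>carrier_vec n. Re ((\<rho> *\<^sub>v v) \<bullet>c v) \<le> \<mu> * Re ((\<sigma> *\<^sub>v v) \<bullet>c v)"
proof -
  have R: "\<rho> \<in> carrier_mat n n" and S: "\<sigma> \<in> carrier_mat n n" using r s unfolding psd_def by blast+
  obtain C where C: "C \<ge> 0"
    "\<forall>x\<in>carrier_vec n. Re ((\<sigma> *\<^sub>v x) \<bullet>c (\<sigma> *\<^sub>v x)) \<le> C * Re ((\<sigma> *\<^sub>v (\<sigma> *\<^sub>v x)) \<bullet>c (\<sigma> *\<^sub>v x))"
    using psd_norm_le_quadratic_form_on_range[OF s] by blast
  obtain CR where CR: "CR \<ge> 0" "\<forall>u\<in>carrier_vec n. Re ((\<rho> *\<^sub>v u) \<bullet>c u) \<le> CR * Re (u \<bullet>c u)"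
    using quadratic_form_bound[OF R] by blast
  have "Re ((\<rho> *\<^sub>v v) \<bullet>c v) \<le> CR * C * Re ((\<sigma> *\<^sub>v v) \<bullet>c v)" if v: "v \<in> carrier_vec n" for v
  proof -
    \<comment> \<open>split \<open>v = a + k\<close> with \<open>a\<close> in the range of \<open>\<sigma>\<close> and \<open>k\<close> in both kernels\<close>
    obtain x where x: "x \<in> carrier_vec n" and "\<sigma> *\<^sub>v (v - \<sigma> *\<^sub>v x) = 0\<^sub>v n"
      using hermitian_range_kernel_decomposition[OF psd_hermitian[OF s] v] by blast
    moreover define a k where "a = \<sigma> *\<^sub>v x" and "k = v - \<sigma> *\<^sub>v x"
    ultimately have a: "a \<in> carrier_vec n" and k: "k \<in> carrier_vec n"
      and \<sigma>k: "\<sigma> *\<^sub>v k = 0\<^sub>v n" and \<rho>k: "\<rho> *\<^sub>v k = 0\<^sub>v n" and v_eq: "v = a + k"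
      using S v ker by (auto intro!: eq_vecI)
    have "Re ((\<rho> *\<^sub>v v) \<bullet>c v) = Re ((\<rho> *\<^sub>v a) \<bullet>c a)"
      unfolding v_eq hermitian_quadratic_form_add_kernel[OF psd_hermitian[OF r] a k \<rho>k] ..
    also have "\<dots> \<le> CR * Re (a \<bullet>c a)" using CR a by blast
    also have "\<dots> \<le> CR * (C * Re ((\<sigma> *\<^sub>v a) \<bullet>c a))"
      using C x CR(1) unfolding \<open>a = \<sigma> *\<^sub>v x\<close> by (intro mult_left_mono) auto
    also have "\<dots> = CR * C * Re ((\<sigma> *\<^sub>v v) \<bullet>c v)"
      unfolding v_eq hermitian_quadratic_form_add_kernel[OF psd_hermitian[OF s] a k \<sigma>k] by simp
    finally show ?thesis .
  qed
  then show ?thesis by blast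
qed

definition dominating_factors :: "nat \<Rightarrow> complex mat \<Rightarrow> complex mat \<Rightarrow> real set" where
  "dominating_factors n \<rho> \<sigma> = {\<mu>. op_le n \<rho> (complex_of_real \<mu> \<cdot>\<^sub>m \<sigma>)}"

lemma mem_dominating_factors_iff:
  assumes r: "psd n \<rho>" and s: "psd n \<sigma>"
  shows "\<mu> \<in> dominating_factors n \<rho> \<sigma> \<longleftrightarrow>
    (\<forall>v\<in>carrier_vec n. Re ((\<rho> *\<^sub>v v) \<bullet>c v) \<le> \<mu> * Re ((\<sigma> *\<^sub>v v) \<bullet>c v))"
proof -
  have R: "\<rho> \<in> carrier_mat n n" and S: "\<sigma> \<in> carrier_mat n n" using r s unfolding psd_def by blast+
  have "((complex_of_real \<mu> \<cdot>\<^sub>m \<sigma> - \<rho>) *\<^sub>v v) \<bullet>c v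
      = complex_of_real (\<mu> * Re ((\<sigma> *\<^sub>v v) \<bullet>c v) - Re ((\<rho> *\<^sub>v v) \<bullet>c v))" if v: "v \<in> carrier_vec n" for v
    using R S v psd_quadratic_form_real[OF r v] psd_quadratic_form_real[OF s v]
    by (simp add: smult_diff_mult_mat_vec[OF S R v] cscalar_prod_diff_left[of _ n] cscalar_prod_smult_left[of _ n])
  then show ?thesis unfolding dominating_factors_def op_le_def psd_def using R S by auto
qed

lemma dominating_factors_upward_closed:
  assumes r: "psd n \<rho>" and s: "psd n \<sigma>" and \<mu>: "\<mu> \<in> dominating_factors n \<rho> \<sigma>" and "\<mu> \<le> \<mu>'"
  shows "\<mu>' \<in> dominating_factors n \<rho> \<sigma>"
proof -
  have "Re ((\<rho> *\<^sub>v v) \<bullet>c v) \<le> \<mu>' * Re ((\<sigma> *\<^sub>v v) \<bullet>c v)" if v: "v \<in> carrier_vec n" for v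
  proof -
    have "Re ((\<rho> *\<^sub>v v) \<bullet>c v) \<le> \<mu> * Re ((\<sigma> *\<^sub>v v) \<bullet>c v)"
      using \<mu> v unfolding mem_dominating_factors_iff[OF r s] by blast
    also have "\<dots> \<le> \<mu>' * Re ((\<sigma> *\<^sub>v v) \<bullet>c v)"
      using \<open>\<mu> \<le> \<mu>'\<close> psd_quadratic_form_nonneg[OF s v] by (rule mult_right_mono)
    finally show ?thesis .
  qed
  then show ?thesis unfolding mem_dominating_factors_iff[OF r s] by blast
qed

lemma dominating_factors_closed:
  assumes r: "psd n \<rho>" and s: "psd n \<sigma>" and above: "\<And>\<mu>'. \<mu> < \<mu>' \<Longrightarrow> \<mu>' \<in> dominating_factors n \<rho> \<sigma>"
  shows "\<mu> \<in> dominating_factors n \<rho> \<sigma>"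
proof -
  have "Re ((\<rho> *\<^sub>v v) \<bullet>c v) \<le> \<mu> * Re ((\<sigma> *\<^sub>v v) \<bullet>c v)" if v: "v \<in> carrier_vec n" for v
  proof -
    define a b where "a = Re ((\<rho> *\<^sub>v v) \<bullet>c v)" and "b = Re ((\<sigma> *\<^sub>v v) \<bullet>c v)"
    have b: "0 \<le> b" unfolding b_def by (rule psd_quadratic_form_nonneg[OF s v])
    have le: "a \<le> \<mu>' * b" if "\<mu> < \<mu>'" for \<mu>'
      using above[OF that] v unfolding mem_dominating_factors_iff[OF r s] a_def b_def by blast
    show ?thesis
    proof (cases "b = 0")
      case True
      with le[of "\<mu> + 1"] show ?thesis unfolding a_def[symmetric] b_def[symmetric] by simp
    next
      case False
      with b have "0 < b" by simp
      have "a / b \<le> \<mu>"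
      proof (rule dense_ge)
        fix \<mu>' assume "\<mu> < \<mu>'"
        with le[of \<mu>'] \<open>0 < b\<close> show "a / b \<le> \<mu>'" by (simp add: divide_le_eq)
      qed
      with \<open>0 < b\<close> show ?thesis unfolding a_def[symmetric] b_def[symmetric] by (simp add: divide_le_eq)
    qed
  qed
  then show ?thesis unfolding mem_dominating_factors_iff[OF r s] by blast
qed

lemma dominating_factors_ge_one:
  assumes r: "density_op n \<rho>" and s: "density_op n \<sigma>" and \<mu>: "\<mu> \<in> dominating_factors n \<rho> \<sigma>"
  shows "1 \<le> \<mu>"
proof -
  have rp: "psd n \<rho>" and sp: "psd n \<sigma>" and tr: "mtrace \<rho> = 1" "mtrace \<sigma> = 1"
    using r s unfolding density_op_def by blast+
  have R: "\<rho> \<in> carrier_mat n n" and S: "\<sigma> \<in> carrier_mat n n" using rp sp unfolding psd_def by blast+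
  have diag: "Re (\<rho> $$ (i, i)) \<le> \<mu> * Re (\<sigma> $$ (i, i))" if i: "i < n" for i
    using \<mu> unit_vec_carrier[of n i] unfolding mem_dominating_factors_iff[OF rp sp]
    by (metis cscalar_prod_unit_vec[OF R i i] cscalar_prod_unit_vec[OF S i i])
  have "Re (mtrace \<rho>) \<le> \<mu> * Re (mtrace \<sigma>)"
    using R S diag unfolding mtrace_def by (simp add: sum_distrib_left) (rule sum_mono, simp)
  with tr show ?thesis by simp
qed

lemma dominating_factors_eq_atLeast:
  assumes r: "density_op n \<rho>" and s: "density_op n \<sigma>" and ne: "dominating_factors n \<rho> \<sigma> \<noteq> {}"
  shows "dominating_factors n \<rho> \<sigma> = {Inf (dominating_factors n \<rho> \<sigma>)..}"
    and "1 \<le> Inf (dominating_factors n \<rho> \<sigma>)"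
proof -
  let ?D = "dominating_factors n \<rho> \<sigma>"
  have rp: "psd n \<rho>" and sp: "psd n \<sigma>" using r s unfolding density_op_def by blast+
  have bdd: "bdd_below ?D" using dominating_factors_ge_one[OF r s] by (intro bdd_belowI)
  have "Inf ?D \<in> ?D"
  proof (rule dominating_factors_closed[OF rp sp])
    fix \<mu>' assume "Inf ?D < \<mu>'"
    then obtain \<mu> where "\<mu> \<in> ?D" "\<mu> < \<mu>'" using cInf_lessD[OF ne] by blast
    then show "\<mu>' \<in> ?D" using dominating_factors_upward_closed[OF rp sp] by simp
  qed
  then show "?D = {Inf ?D..}"
    using bdd dominating_factors_upward_closed[OF rp sp] by (auto intro: cInf_lower)
  show "1 \<le> Inf ?D"
    using ne dominating_factors_ge_one[OF r s] by (intro cInf_greatest)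
qed

lemma dominating_factors_nonempty_iff:
  assumes r: "psd n \<rho>" and s: "psd n \<sigma>"
  shows "dominating_factors n \<rho> \<sigma> \<noteq> {} \<longleftrightarrow> supp_op n \<rho> \<subseteq> supp_op n \<sigma>"
proof
  assume "dominating_factors n \<rho> \<sigma> \<noteq> {}"
  then obtain \<mu> where \<mu>: "\<mu> \<in> dominating_factors n \<rho> \<sigma>" by blast
  show "supp_op n \<rho> \<subseteq> supp_op n \<sigma>"
  proof (rule hermitian_supp_subset_of_kernel_subset[OF psd_hermitian[OF r] psd_hermitian[OF s]])
    fix k assume k: "k \<in> carrier_vec n" and "\<sigma> *\<^sub>v k = 0\<^sub>v n"
    then have "Re ((\<rho> *\<^sub>v k) \<bullet>c k) \<le> 0"
      using \<mu> unfolding mem_dominating_factors_iff[OF r s] by force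
    with psd_quadratic_form_nonneg[OF r k] show "\<rho> *\<^sub>v k = 0\<^sub>v n"
      by (intro psd_kernel_of_quadratic_form_eq_0[OF r k]) simp
  qed
next
  assume "supp_op n \<rho> \<subseteq> supp_op n \<sigma>"
  then have "\<forall>k\<in>carrier_vec n. \<sigma> *\<^sub>v k = 0\<^sub>v n \<longrightarrow> \<rho> *\<^sub>v k = 0\<^sub>v n"
    using hermitian_kernel_subset_of_supp_subset[OF psd_hermitian[OF r] psd_hermitian[OF s]] by blast
  then show "dominating_factors n \<rho> \<sigma> \<noteq> {}"
    using psd_le_scaled_of_kernel_subset[OF r s] mem_dominating_factors_iff[OF r s] by blast
qed

lemma Dmax_eq_log_Inf_dominating_factors:
  assumes "psd n \<rho>" and "psd n \<sigma>"
  shows "Dmax n \<rho> \<sigma> =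
    (if dominating_factors n \<rho> \<sigma> = {} then \<infinity> else ereal (log 2 (Inf (dominating_factors n \<rho> \<sigma>))))"
  using dominating_factors_nonempty_iff[OF assms] unfolding Dmax_def dominating_factors_def by auto

lemma mixture_carrier_mat: "mixture n \<pi> \<rho> \<in> carrier_mat n n"
  unfolding mixture_def by simp

lemma quadratic_form_mixture:
  assumes R: "\<And>x. \<rho> x \<in> carrier_mat n n" and v: "v \<in> carrier_vec n"
  shows "(mixture n \<pi> \<rho> *\<^sub>v v) \<bullet>c v = (\<Sum>x\<in>UNIV. complex_of_real (\<pi> x) * ((\<rho> x *\<^sub>v v) \<bullet>c v))"
proof -
  have qf: "(A *\<^sub>v v) \<bullet>c v = (\<Sum>i<n. \<Sum>j<n. A $$ (i, j) * v $ j * cnj (v $ i))"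
    if A: "A \<in> carrier_mat n n" for A
    using A v by (simp add: cscalar_prod_eq_sum[of _ n] mult_mat_vec_eq_sum[OF A v] sum_distrib_right
        del: index_mult_mat_vec)
  have "(mixture n \<pi> \<rho> *\<^sub>v v) \<bullet>c v
      = (\<Sum>i<n. \<Sum>j<n. \<Sum>x\<in>UNIV. complex_of_real (\<pi> x) * (\<rho> x $$ (i, j) * v $ j * cnj (v $ i)))"
    unfolding qf[OF mixture_carrier_mat] by (simp add: mixture_def sum_distrib_left sum_distrib_right mult_ac)
  also have "\<dots> = (\<Sum>x\<in>UNIV. complex_of_real (\<pi> x) * ((\<rho> x *\<^sub>v v) \<bullet>c v))"
    unfolding qf[OF R] sum_distrib_left by (subst sum.swap, subst (2) sum.swap) simp
  finally show ?thesis .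
qed

lemma mixture_density_op:
  assumes \<rho>: "\<And>x. density_op n (\<rho> x)" and \<pi>: "\<pi> \<in> pmfs"
  shows "density_op n (mixture n \<pi> \<rho>)"
proof -
  have P: "\<And>x. psd n (\<rho> x)" and tr: "\<And>x. mtrace (\<rho> x) = 1"
    using \<rho> unfolding density_op_def by blast+
  have R: "\<And>x. \<rho> x \<in> carrier_mat n n" using P unfolding psd_def by blast
  have \<pi>_nonneg: "\<And>x. 0 \<le> \<pi> x" and \<pi>_sum: "(\<Sum>x\<in>UNIV. \<pi> x) = 1"
    using \<pi> unfolding pmfs_def by blast+
  have "(mixture n \<pi> \<rho> *\<^sub>v v) \<bullet>c v = complex_of_real (\<Sum>x\<in>UNIV. \<pi> x * Re ((\<rho> x *\<^sub>v v) \<bullet>c v))"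
    if v: "v \<in> carrier_vec n" for v
    unfolding quadratic_form_mixture[OF R v] of_real_sum
    by (intro sum.cong refl) (subst psd_quadratic_form_real[OF P v], simp)
  moreover have "0 \<le> (\<Sum>x\<in>UNIV. \<pi> x * Re ((\<rho> x *\<^sub>v v) \<bullet>c v))" if v: "v \<in> carrier_vec n" for v
    by (intro sum_nonneg mult_nonneg_nonneg \<pi>_nonneg psd_quadratic_form_nonneg[OF P v])
  ultimately have "psd n (mixture n \<pi> \<rho>)"
    unfolding psd_def using mixture_carrier_mat by simp
  moreover have "mtrace (mixture n \<pi> \<rho>) = (\<Sum>x\<in>UNIV. complex_of_real (\<pi> x) * mtrace (\<rho> x))"
  proof -
    have "dim_row (\<rho> x) = n" for x using R[of x] by simp
    then show ?thesis unfolding mtrace_def by (simp add: mixture_def sum_distrib_left) (rule sum.swap)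
  qed
  ultimately show ?thesis
    unfolding density_op_def tr using \<pi>_sum by (simp flip: of_real_sum)
qed

lemma uniform_mixture_dominates:
  fixes \<rho> :: "'x :: finite \<Rightarrow> complex mat"
  assumes \<rho>: "\<And>x. density_op n (\<rho> x)"
  shows "\<exists>\<pi>\<in>pmfs. \<forall>x. real (card (UNIV :: 'x set)) \<in> dominating_factors n (\<rho> x) (mixture n \<pi> \<rho>)"
proof -
  define N where "N = real (card (UNIV :: 'x set))"
  define u :: "'x \<Rightarrow> real" where "u = (\<lambda>_. 1 / N)"
  have u: "u \<in> pmfs" unfolding pmfs_def u_def N_def by simp
  have P: "\<And>x. psd n (\<rho> x)" using \<rho> unfolding density_op_def by blast
  have R: "\<And>x. \<rho> x \<in> carrier_mat n n" using P unfolding psd_def by blast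
  have M: "psd n (mixture n u \<rho>)"
    using mixture_density_op[of n \<rho>, OF \<rho> u] unfolding density_op_def by blast
  have "Re ((\<rho> x *\<^sub>v v) \<bullet>c v) \<le> N * Re ((mixture n u \<rho> *\<^sub>v v) \<bullet>c v)" if v: "v \<in> carrier_vec n" for x v
  proof -
    have "Re ((\<rho> x *\<^sub>v v) \<bullet>c v) \<le> (\<Sum>y\<in>UNIV. Re ((\<rho> y *\<^sub>v v) \<bullet>c v))"
      by (rule member_le_sum) (auto intro: psd_quadratic_form_nonneg[OF P v])
    also have "\<dots> = N * Re ((mixture n u \<rho> *\<^sub>v v) \<bullet>c v)"
      unfolding quadratic_form_mixture[OF R v] by (simp add: u_def N_def sum_distrib_left)
    finally show ?thesis .
  qed
  then have "\<forall>x. N \<in> dominating_factors n (\<rho> x) (mixture n u \<rho>)"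
    using mem_dominating_factors_iff[OF P M] by blast
  with u show ?thesis unfolding N_def by blast
qed

section \<open>Max-relative entropy against mixtures\<close>

lemma Max_Dmax_eq_log_Inf_common_dominating_factors:
  fixes \<rho> :: "'x :: finite \<Rightarrow> complex mat"
  assumes \<rho>: "\<And>x. density_op n (\<rho> x)" and \<sigma>: "density_op n \<sigma>"
  defines "D \<equiv> \<Inter>x. dominating_factors n (\<rho> x) \<sigma>"
  shows "Max (range (\<lambda>x. Dmax n (\<rho> x) \<sigma>)) = (if D = {} then \<infinity> else ereal (log 2 (Inf D)))"
proof -
  have P: "\<And>x. psd n (\<rho> x)" and S: "psd n \<sigma>" using \<rho> \<sigma> unfolding density_op_def by blast+
  note Dmax = Dmax_eq_log_Inf_dominating_factors[OF P S]
  show ?thesis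
  proof (cases "\<exists>x. dominating_factors n (\<rho> x) \<sigma> = {}")
    case True
    then obtain x where x: "dominating_factors n (\<rho> x) \<sigma> = {}" by blast
    have "Dmax n (\<rho> x) \<sigma> \<le> Max (range (\<lambda>x. Dmax n (\<rho> x) \<sigma>))" by (rule Max_ge) auto
    moreover have "D = {}" using x unfolding D_def by blast
    ultimately show ?thesis using x Dmax[of x] by simp
  next
    case False
    define m where "m x = Inf (dominating_factors n (\<rho> x) \<sigma>)" for x
    have DF: "dominating_factors n (\<rho> x) \<sigma> = {m x..}" and m: "1 \<le> m x" for x
      using dominating_factors_eq_atLeast[OF \<rho> \<sigma>] False unfolding m_def by blast+
    have "Max (range m) \<in> range m" by (rule Max_in) auto
    then obtain x0 where x0: "m x0 = Max (range m)" by (metis rangeE)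
    have max: "m x \<le> m x0" for x unfolding x0 by (rule Max_ge) auto
    have "D = {m x0..}" unfolding D_def DF using max by (auto intro: order_trans)
    moreover have "Max (range (\<lambda>x. Dmax n (\<rho> x) \<sigma>)) = ereal (log 2 (m x0))"
    proof (rule antisym)
      have "Dmax n (\<rho> x) \<sigma> \<le> ereal (log 2 (m x0))" for x
        using max[of x] m[of x] by (simp add: Dmax DF)
      then show "Max (range (\<lambda>x. Dmax n (\<rho> x) \<sigma>)) \<le> ereal (log 2 (m x0))"
        by (intro Max.boundedI) auto
      show "ereal (log 2 (m x0)) \<le> Max (range (\<lambda>x. Dmax n (\<rho> x) \<sigma>))"
        using Max_ge[of "range (\<lambda>x. Dmax n (\<rho> x) \<sigma>)" "Dmax n (\<rho> x0) \<sigma>"] by (simp add: Dmax DF)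
    qed
    ultimately show ?thesis by simp
  qed
qed

lemma le_log_Inf:
  fixes L :: ereal
  assumes ne: "S \<noteq> {}" and b: "0 < b" and lower: "\<And>\<mu>. \<mu> \<in> S \<Longrightarrow> b \<le> \<mu>"
    and le: "\<And>\<mu>. \<mu> \<in> S \<Longrightarrow> L \<le> ereal (log 2 \<mu>)"
  shows "L \<le> ereal (log 2 (Inf S))"
proof (rule dense_ge)
  fix y assume y: "ereal (log 2 (Inf S)) < y"
  show "L \<le> y"
  proof (cases y)
    case (real l)
    have "b \<le> Inf S" using ne lower by (intro cInf_greatest)
    with y b real have "Inf S < 2 powr l" by (simp add: log_less_iff)
    then obtain \<mu> where \<mu>: "\<mu> \<in> S" "\<mu> < 2 powr l" using cInf_lessD[OF ne] by blast
    moreover have "0 < \<mu>" using lower[OF \<mu>(1)] b by simp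
    ultimately have "log 2 \<mu> < l" by (simp add: log_less_iff)
    then have "ereal (log 2 \<mu>) \<le> y" using real by simp
    with le[OF \<mu>(1)] show ?thesis by (rule order_trans)
  next
    case PInf
    then show ?thesis by simp
  next
    case MInf
    with y show ?thesis by simp
  qed
qed

lemma INF_log_Inf_eq_log_Inf_UNION:
  fixes M :: "'i \<Rightarrow> real set"
  assumes ne: "(\<Union>i\<in>I. M i) \<noteq> {}" and b: "0 < b" and lower: "\<And>i \<mu>. i \<in> I \<Longrightarrow> \<mu> \<in> M i \<Longrightarrow> b \<le> \<mu>"
  shows "(INF i\<in>I. if M i = {} then \<infinity> else ereal (log 2 (Inf (M i)))) = ereal (log 2 (Inf (\<Union>i\<in>I. M i)))"
    (is "?L = ereal (log 2 (Inf ?U))")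
proof (rule antisym)
  have bdd: "bdd_below (M i)" "bdd_below ?U" if "i \<in> I" for i
    using lower that by (auto intro!: bdd_belowI[of _ b])
  show "?L \<le> ereal (log 2 (Inf ?U))"
  proof (rule le_log_Inf[OF ne b])
    fix \<mu> assume "\<mu> \<in> ?U"
    then obtain i where i: "i \<in> I" "\<mu> \<in> M i" by blast
    have "b \<le> Inf (M i)" using i lower by (intro cInf_greatest) blast+
    moreover have "Inf (M i) \<le> \<mu>" by (rule cInf_lower[OF i(2) bdd(1)[OF i(1)]])
    ultimately have "log 2 (Inf (M i)) \<le> log 2 \<mu>" using b by simp
    have "?L \<le> (if M i = {} then \<infinity> else ereal (log 2 (Inf (M i))))"
      by (rule INF_lower[OF i(1)])
    also have "\<dots> \<le> ereal (log 2 \<mu>)"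
      using i(2) \<open>log 2 (Inf (M i)) \<le> log 2 \<mu>\<close> by auto
    finally show "?L \<le> ereal (log 2 \<mu>)" .
  qed (use lower in blast)
  show "ereal (log 2 (Inf ?U)) \<le> ?L"
  proof (rule INF_greatest)
    fix i assume i: "i \<in> I"
    show "ereal (log 2 (Inf ?U)) \<le> (if M i = {} then \<infinity> else ereal (log 2 (Inf (M i))))"
    proof (cases "M i = {}")
      case False
      have "b \<le> Inf ?U" using lower by (intro cInf_greatest[OF ne]) blast
      with b have "0 < Inf ?U" by simp
      moreover have "Inf ?U \<le> Inf (M i)" using i False bdd by (intro cInf_superset_mono) auto
      ultimately show ?thesis using False by simp
    qed simp
  qed
qed

theorem proposition2:
  fixes d :: nat and \<rho> :: "'x::finite \<Rightarrow> complex mat"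
  assumes "\<And>x. density_op d (\<rho> x)"
  shows "barycentric_leakage d \<rho> =
    ereal (log 2 (Inf {\<mu>::real. \<exists>\<pi>\<in>pmfs.
       \<forall>x. op_le d (\<rho> x) (complex_of_real \<mu> \<cdot>\<^sub>m mixture d \<pi> \<rho>)}))"
proof -
  let ?D = "\<lambda>\<pi>. \<Inter>x. dominating_factors d (\<rho> x) (mixture d \<pi> \<rho>)"
  have "barycentric_leakage d \<rho> = (INF \<pi>\<in>pmfs. if ?D \<pi> = {} then \<infinity> else ereal (log 2 (Inf (?D \<pi>))))"
  proof -
    have "Max (range (\<lambda>x. Dmax d (\<rho> x) (mixture d \<pi> \<rho>))) =
        (if ?D \<pi> = {} then \<infinity> else ereal (log 2 (Inf (?D \<pi>))))" if "\<pi> \<in> pmfs" for \<pi>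
      using mixture_density_op[where \<rho> = \<rho>, OF assms that]
      by (rule Max_Dmax_eq_log_Inf_common_dominating_factors[OF assms])
    then show ?thesis unfolding barycentric_leakage_def by (rule INF_cong[OF refl])
  qed
  also have "\<dots> = ereal (log 2 (Inf (\<Union>\<pi>\<in>pmfs. ?D \<pi>)))"
  proof (rule INF_log_Inf_eq_log_Inf_UNION)
    show "(\<Union>\<pi>\<in>pmfs. ?D \<pi>) \<noteq> {}"
      using uniform_mixture_dominates[where \<rho> = \<rho>, OF assms] by blast
    show "1 \<le> \<mu>" if "\<pi> \<in> pmfs" and "\<mu> \<in> ?D \<pi>" for \<pi> \<mu>
      using that(2) mixture_density_op[where \<rho> = \<rho>, OF assms that(1)]
      by (intro dominating_factors_ge_one[OF assms]) blast+
  qed simp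
  also have "(\<Union>\<pi>\<in>pmfs. ?D \<pi>) =
      {\<mu>. \<exists>\<pi>\<in>pmfs. \<forall>x. op_le d (\<rho> x) (complex_of_real \<mu> \<cdot>\<^sub>m mixture d \<pi> \<rho>)}"
    unfolding dominating_factors_def by auto
  finally show ?thesis .
qed

end
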